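(* Let $U\subseteq\mathrm{Homeo}^+(\mathbb{R})$ and let $\sim$ be an equivalence relation on $\mathbb{R}$ such that: (1) no $\sim$-equivalence class has full measure (i.e., for each class $C$, $\mathbb{R}\setminus C$ has positive outer Lebesgue measure); and (2) for every $(x,y)\in\mathbb{R}^2$ there is $\varphi\in U$ with $\varphi(x)=y$ and $z\sim\varphi(z)$ for all $z\neq x$. Then there is no good $U$-anonymous weak $\mathbb{R}/\sim$-predictor. In fact, for every $U$-anonymous weak $\mathbb{R}/\sim$-predictor $\mathcal{P}$, the function $E:\mathbb{R}\to\mathbb{R}/\sim$, $E(x)=[x]_\sim$, satisfies: the set $\{x:\mathcal{P}(E|_{\mathbb{R}\setminus\{x\}})\neq E(x)\}$ does not have Lebesgue measure zero.
   Context: $\mathrm{Homeo}^+(\mathbb{R})$ is the group of increasing homeomorphisms of $\mathbb{R}$. For a set $S$, a weak $S$-predictor is a function $\mathcal{P}$ from the set of $S$-valued functions $f$ with domain $\mathbb{R}\setminus\{h_f\}$ for some $h_f\in\mathbb{R}$ into $S$. It is good if for every $F:\mathbb{R}\to S$ the set $\{x:\mathcal{P}(F|_{\mathbb{R}\setminus\{x\}})\neq F(x)\}$ has Lebesgue measure zero. It is $U$-anonymous if whenever $f,g$ are such functions with holes $h_f,h_g$, $\varphi\in U$, $\varphi(h_f)=h_g$, and $f=(g\circ\varphi)|_{\mathbb{R}\setminus\{h_f\}}$, then $\mathcal{P}(f)=\mathcal{P}(g)$. *)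

theory Defs
  imports "HOL-Analysis.Analysis"
begin

definition Homeo_plus :: "(real \<Rightarrow> real) set" where
  "Homeo_plus = {\<phi>. (\<exists>\<psi>. homeomorphism UNIV UNIV \<phi> \<psi>) \<and> strict_mono \<phi>}"

definition holed_funs :: "'a set \<Rightarrow> (real \<Rightarrow> 'a option) set" where
  "holed_funs S = {f. (\<exists>h. dom f = UNIV - {h}) \<and> ran f \<subseteq> S}"

definition restr_hole :: "(real \<Rightarrow> 'a) \<Rightarrow> real \<Rightarrow> (real \<Rightarrow> 'a option)" where
  "restr_hole F x = (\<lambda>y. if y = x then None else Some (F y))"

definition weak_predictor :: "'a set \<Rightarrow> ((real \<Rightarrow> 'a option) \<Rightarrow> 'a) \<Rightarrow> bool" where
  "weak_predictor S P \<longleftrightarrow> (\<forall>f \<in> holed_funs S. P f \<in> S)"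

definition good_predictor :: "'a set \<Rightarrow> ((real \<Rightarrow> 'a option) \<Rightarrow> 'a) \<Rightarrow> bool" where
  "good_predictor S P \<longleftrightarrow>
     (\<forall>F :: real \<Rightarrow> 'a. (\<forall>x. F x \<in> S) \<longrightarrow>
        {x. P (restr_hole F x) \<noteq> F x} \<in> null_sets lebesgue)"

definition anonymous_predictor ::
  "(real \<Rightarrow> real) set \<Rightarrow> 'a set \<Rightarrow> ((real \<Rightarrow> 'a option) \<Rightarrow> 'a) \<Rightarrow> bool" where
  "anonymous_predictor U S P \<longleftrightarrow>
     (\<forall>f \<in> holed_funs S. \<forall>g \<in> holed_funs S. \<forall>hf hg. \<forall>\<phi> \<in> U.
        dom f = UNIV - {hf} \<and> dom g = UNIV - {hg} \<and> \<phi> hf = hg \<and>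
        (\<forall>y. y \<noteq> hf \<longrightarrow> f y = g (\<phi> y))
        \<longrightarrow> P f = P g)"

end

theory Submission
  imports Defs
begin

text \<open>
  Condition (2) moves any hole to any other hole by a map in \<open>U\<close> that preserves the class map
  \<open>E x = [x]\<close> off the hole, so by anonymity a predictor sees the same input \<open>E\<close> with a hole
  wherever the hole is: it predicts one fixed class \<open>C\<close> everywhere. It is therefore wrong exactly
  on the complement of \<open>C\<close>, which by condition (1) has positive outer measure.
\<close>

lemma Homeo_plus_inj: "\<phi> \<in> Homeo_plus \<Longrightarrow> inj \<phi>"
  by (auto simp: Homeo_plus_def strict_mono_imp_inj_on)

lemma dom_restr_hole [simp]: "dom (restr_hole F x) = UNIV - {x}"
  by (auto simp: restr_hole_def dom_def)

lemma restr_hole_in_holed_funs: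
  assumes "\<And>y. F y \<in> S"
  shows "restr_hole F x \<in> holed_funs S"
proof -
  have "ran (restr_hole F x) \<subseteq> S" using assms by (auto simp: ran_def restr_hole_def)
  then show ?thesis unfolding holed_funs_def by (intro CollectI conjI exI[of _ x] dom_restr_hole)
qed

lemma restr_hole_transport:
  assumes "inj \<phi>" "\<phi> x = x'" "\<And>y. y \<noteq> x \<Longrightarrow> F (\<phi> y) = F y" "y \<noteq> x"
  shows "restr_hole F x y = restr_hole F x' (\<phi> y)"
proof -
  have "\<phi> y \<noteq> x'" using assms(1,2,4) by (auto dest: injD)
  then show ?thesis using assms(3,4) by (simp add: restr_hole_def)
qed

lemma anonymous_predictor_restr_hole_eq:
  assumes "anonymous_predictor U S P" "\<And>y. F y \<in> S"
    and "\<phi> \<in> U" "inj \<phi>" "\<phi> x = x'" "\<And>y. y \<noteq> x \<Longrightarrow> F (\<phi> y) = F y"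
  shows "P (restr_hole F x) = P (restr_hole F x')"
proof -
  have "restr_hole F x y = restr_hole F x' (\<phi> y)" if "y \<noteq> x" for y
    using restr_hole_transport[where F = F, OF assms(4,5) assms(6) that] by blast
  then show ?thesis
    using assms(1)[unfolded anonymous_predictor_def, rule_format,
        of "restr_hole F x" "restr_hole F x'" \<phi> x x']
      restr_hole_in_holed_funs[OF assms(2)] assms(3,5) by simp
qed

lemma Collect_equiv_class_ne:
  assumes "equiv UNIV r" "C \<in> UNIV // r"
  shows "{x. C \<noteq> r `` {x}} = UNIV - C"
proof -
  obtain a where C: "C = r `` {a}" using assms(2) by (auto elim: quotientE)
  have "r `` {a} = r `` {x} \<longleftrightarrow> x \<in> r `` {a}" for x
    using eq_equiv_class_iff[OF assms(1)] by simp
  then show ?thesis unfolding C by auto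
qed

lemma outer_measure_of_pos_not_null:
  assumes "0 < outer_measure_of M A"
  shows "A \<notin> null_sets M"
  using assms by (auto simp: null_sets_def)

lemma anonymous_class_predictor_const:
  assumes "U \<subseteq> Homeo_plus" "equiv UNIV r"
    and transitive: "\<forall>x y. \<exists>\<phi> \<in> U. \<phi> x = y \<and> (\<forall>z. z \<noteq> x \<longrightarrow> (z, \<phi> z) \<in> r)"
    and "anonymous_predictor U (UNIV // r) P"
  shows "P (restr_hole (\<lambda>x. r `` {x}) x) = P (restr_hole (\<lambda>x. r `` {x}) x')"
proof -
  obtain \<phi> where \<phi>: "\<phi> \<in> U" "\<phi> x = x'" "\<And>z. z \<noteq> x \<Longrightarrow> (z, \<phi> z) \<in> r"
    using transitive by blast
  have "r `` {\<phi> z} = r `` {z}" if "z \<noteq> x" for z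
    using equiv_class_eq[OF assms(2) \<phi>(3)[OF that]] by simp
  with \<phi> assms(1) show ?thesis
    by (intro anonymous_predictor_restr_hole_eq[OF assms(4), where \<phi> = \<phi>])
      (auto intro: quotientI Homeo_plus_inj)
qed

lemma anonymous_class_predictor_errors_not_null:
  assumes "U \<subseteq> Homeo_plus" "equiv UNIV r"
    and "\<forall>C \<in> UNIV // r. outer_measure_of lebesgue (UNIV - C) > 0"
    and "\<forall>x y. \<exists>\<phi> \<in> U. \<phi> x = y \<and> (\<forall>z. z \<noteq> x \<longrightarrow> (z, \<phi> z) \<in> r)"
    and "weak_predictor (UNIV // r) P" "anonymous_predictor U (UNIV // r) P"
  shows "{x. P (restr_hole (\<lambda>x. r `` {x}) x) \<noteq> r `` {x}} \<notin> null_sets lebesgue"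
proof -
  define C where "C = P (restr_hole (\<lambda>x. r `` {x}) 0)"
  have "restr_hole (\<lambda>x. r `` {x}) 0 \<in> holed_funs (UNIV // r)"
    by (rule restr_hole_in_holed_funs) (rule quotientI, simp)
  then have C: "C \<in> UNIV // r"
    using assms(5) unfolding weak_predictor_def C_def by blast
  have "{x. P (restr_hole (\<lambda>x. r `` {x}) x) \<noteq> r `` {x}} = {x. C \<noteq> r `` {x}}"
    using anonymous_class_predictor_const[OF assms(1,2,4,6)] unfolding C_def by metis
  also have "\<dots> = UNIV - C"
    using Collect_equiv_class_ne[OF assms(2) C] .
  finally show ?thesis
    using outer_measure_of_pos_not_null assms(3) C by metis
qed

theorem lemma5p2:
  fixes U :: "(real \<Rightarrow> real) set" and r :: "(real \<times> real) set"
  assumes "U \<subseteq> Homeo_plus"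
    and "equiv UNIV r"
    and "\<forall>C \<in> UNIV // r. outer_measure_of lebesgue (UNIV - C) > 0"
    and "\<forall>x y. \<exists>\<phi> \<in> U. \<phi> x = y \<and> (\<forall>z. z \<noteq> x \<longrightarrow> (z, \<phi> z) \<in> r)"
  shows "\<not> (\<exists>P. weak_predictor (UNIV // r) P \<and> anonymous_predictor U (UNIV // r) P
                 \<and> good_predictor (UNIV // r) P)
         \<and> (\<forall>P. weak_predictor (UNIV // r) P \<and> anonymous_predictor U (UNIV // r) P \<longrightarrow>
              {x. P (restr_hole (\<lambda>x. r `` {x}) x) \<noteq> r `` {x}} \<notin> null_sets lebesgue)"
proof -
  have errors: "{x. P (restr_hole (\<lambda>x. r `` {x}) x) \<noteq> r `` {x}} \<notin> null_sets lebesgue"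
    if "weak_predictor (UNIV // r) P" "anonymous_predictor U (UNIV // r) P" for P
    using anonymous_class_predictor_errors_not_null[OF assms that] .
  moreover have "\<not> good_predictor (UNIV // r) P"
    if "weak_predictor (UNIV // r) P" "anonymous_predictor U (UNIV // r) P" for P
    using errors[OF that] unfolding good_predictor_def
    by (metis UNIV_I quotientI)
  ultimately show ?thesis by blast
qed

end
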